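(* Let $T=\sum_{\lambda\in\Lambda}c_\lambda U_\lambda\in\mathcal{A}$, $\Lambda=\mathrm{supp}(c)$. For $\rho>0$ let $X_\rho=L^{2,\infty}(\mathbb{R}^d\times E_\rho(0))$. (1) If $\Lambda\subset\mathbb{R}^d\times E_\Omega(0)$ for some $\Omega>0$, then for every $\rho>0$, $T$ extends to a bounded operator $\mathbf{T}$ on $X_\rho$ with $\|\mathbf{T}\|_{B(X_\rho)}\le Ce^{\rho\Omega}$, where $C=\|T\|_{\mathcal{A}}$. (2) Conversely, if $T$ extends to a bounded operator $\mathbf{T}$ on $X_\rho$ for all $\rho>0$ with $\|\mathbf{T}\|_{B(X_\rho)}\le Ce^{\rho\Omega}$ for some $C>0$, $\Omega>0$ independent of $\rho$, then $\Lambda\subset\mathbb{R}^d\times E_\Omega(0)$. (3) If $\Lambda\subset E_D(0)\times\mathbb{R}^d$ for some $D>0$, then for every $\rho>0$ the operator $S=\mathcal{F}^*T\mathcal{F}$ extends to a bounded operator $\mathbf{S}$ on $X_\rho$ with $\|\mathbf{S}\|_{B(X_\rho)}\le Ce^{\rho D}$, where $C=\|T\|_{\mathcal{A}}$. (4) Conversely, if $S=\mathcal{F}^*T\mathcal{F}$ extends to a bounded operator $\mathbf{S}$ on $X_\rho$ for all $\rho>0$ with $\|\mathbf{S}\|_{B(X_\rho)}\le Ce^{\rho D}$ for some $C,D>0$ independent of $\rho$, then $\Lambda\subset E_D(0)\times\mathbb{R}^d$.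
   Context: For $\lambda=(t,\omega)\in\mathbb{R}^d\times\mathbb{R}^d$, $U_{(t,\omega)}f(x)=e^{i\langle\omega,x\rangle}f(x-t)$ on $L^2(\mathbb{R}^d)$. $\mathcal{A}$ is the algebra of operators $T=\sum_{\lambda}c_\lambda U_\lambda$ with $\|T\|_{\mathcal{A}}:=\sum_\lambda|c_\lambda|<\infty$; $\mathrm{supp}(c)=\{\lambda:c_\lambda\ne0\}$. $E_r(0)=\{x\in\mathbb{R}^d:\|x\|\le r\}$ is the closed Euclidean ball. $\mathcal{F}f(\omega)=(2\pi)^{-d/2}\int e^{-i\langle\omega,x\rangle}f(x)dx$ is the unitary Fourier transform; $\mathcal{F}^*T\mathcal{F}$ again belongs to $\mathcal{A}$ (conjugating a time-frequency shift by $\mathcal{F}$ gives a time-frequency shift with time and frequency parameters interchanged, up to sign and a unimodular factor). For a compact neighborhood $I$ of $0\in\mathbb{R}^d$, $L^{2,\infty}(\mathbb{R}^d\times I)$ is the Banach space of $f:\mathbb{R}^d\times I\to\mathbb{C}$ with $\|f\|^2_{2,\infty}=\sup_{y\in I}\int_{\mathbb{R}^d}|f(x,y)|^2dx<\infty$. An operator $R=\sum_\lambda a_\lambda U_\lambda\in\mathcal{A}$ is said to extend to $L^{2,\infty}(\mathbb{R}^d\times I)$ if the formula $\mathbf{R}f(x,y)=\sum_{\lambda=(t,\omega)}a_\lambda e^{i\langle\omega,x+iy\rangle}f(x-t,y)$ defines a bounded operator $\mathbf{R}$ on that space. *)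

theory Defs
  imports "HOL-Analysis.Analysis"
begin

text \<open>Dimension: an arbitrary Euclidean space 'a (playing the role of R^d).
  An element T of the algebra A is represented by its coefficient function
  c :: ('a \<times> 'a) \<Rightarrow> complex, with lambda = (t, omega).\<close>

definition tf_supp :: "('a \<times> 'a \<Rightarrow> complex) \<Rightarrow> ('a \<times> 'a) set" where
  "tf_supp c = {l. c l \<noteq> 0}"

definition in_algebra_A :: "('a \<times> 'a \<Rightarrow> complex) \<Rightarrow> bool" where
  "in_algebra_A c \<longleftrightarrow> (\<lambda>l. norm (c l)) summable_on UNIV"

definition A_norm :: "('a \<times> 'a \<Rightarrow> complex) \<Rightarrow> real" where
  "A_norm c = (\<Sum>\<^sub>\<infinity>l. norm (c l))"

definition L2_sq :: "('a::euclidean_space \<Rightarrow> complex) \<Rightarrow> ennreal" where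
  "L2_sq g = (\<integral>\<^sup>+ x. ennreal ((norm (g x))\<^sup>2) \<partial>lborel)"

definition L2inf_sq :: "real \<Rightarrow> ('a::euclidean_space \<Rightarrow> 'a \<Rightarrow> complex) \<Rightarrow> ennreal" where
  "L2inf_sq \<rho> f = (SUP y \<in> cball 0 \<rho>. L2_sq (\<lambda>x. f x y))"

definition in_X :: "real \<Rightarrow> ('a::euclidean_space \<Rightarrow> 'a \<Rightarrow> complex) \<Rightarrow> bool" where
  "in_X \<rho> f \<longleftrightarrow> (\<forall>y \<in> cball 0 \<rho>. (\<lambda>x. f x y) \<in> borel_measurable lborel)
                   \<and> L2inf_sq \<rho> f < \<infinity>"

definition ext_term :: "('a \<times> 'a \<Rightarrow> complex) \<Rightarrow> ('a::euclidean_space \<Rightarrow> 'a \<Rightarrow> complex)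
     \<Rightarrow> 'a \<times> 'a \<Rightarrow> 'a \<Rightarrow> 'a \<Rightarrow> complex" where
  "ext_term a f l x y =
     a l * exp (\<i> * (complex_of_real (snd l \<bullet> x) + \<i> * complex_of_real (snd l \<bullet> y)))
         * f (x - fst l) y"

definition L2_has_sum :: "('b \<Rightarrow> 'a::euclidean_space \<Rightarrow> complex) \<Rightarrow> ('a \<Rightarrow> complex) \<Rightarrow> bool" where
  "L2_has_sum u g \<longleftrightarrow>
     ((\<lambda>F. L2_sq (\<lambda>x. g x - (\<Sum>l\<in>F. u l x))) \<longlongrightarrow> 0) (finite_subsets_at_top UNIV)"

definition extends_bounded :: "real \<Rightarrow> ('a::euclidean_space \<times> 'a \<Rightarrow> complex) \<Rightarrow> real \<Rightarrow> bool" where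
  "extends_bounded \<rho> a M \<longleftrightarrow>
     (\<forall>f. in_X \<rho> f \<longrightarrow>
        (\<exists>g. in_X \<rho> g
             \<and> (\<forall>y \<in> cball 0 \<rho>. L2_has_sum (\<lambda>l x. ext_term a f l x y) (\<lambda>x. g x y))
             \<and> L2inf_sq \<rho> g \<le> ennreal (M\<^sup>2) * L2inf_sq \<rho> f))"

text \<open>Coefficients of S = F^* T F.  With the unitary Fourier transform one computes
  F^* U_(t,omega) F = e^{i<t,omega>} U_(-omega,t), hence the coefficient of S at (t',omega')
  is c(omega', -t') e^{-i<omega',t'>}.\<close>
definition fourier_conj_coeffs :: "('a::euclidean_space \<times> 'a \<Rightarrow> complex) \<Rightarrow> 'a \<times> 'a \<Rightarrow> complex" where
  "fourier_conj_coeffs c l = c (snd l, - fst l) * exp (- \<i> * complex_of_real (snd l \<bullet> fst l))"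

end

(*
  On X_rho the lambda-th term of the extended operator is a time-frequency shift U_lambda
  in x, weighted by c_lambda exp(-<omega, y>).  If the frequencies are bounded by Omega the
  weights are at most |c_lambda| exp(rho Omega), and the series converges absolutely in L^2
  for every y, which gives (1).

  For (2), fix lambda0 = (t0, omega0) in the support and test the extension on the wave
  packets U_(n z) chi, chi the indicator of the unit cube, pairing the result at
  y = -rho omega0/|omega0| with U_lambda0 U_(n z) chi.  This produces power sums
  sum_lambda d_lambda zeta_lambda^n bounded by the operator norm, where zeta_lambda0 = 1 and
  d_lambda0 = c_lambda0 exp(rho |omega0|).  For z off a countable union of hyperplanes all
  other phases zeta_lambda differ from 1, so Cesaro averaging over n isolates d_lambda0.
  Hence |c_lambda0| exp(rho |omega0|) <= C exp(rho Omega) for all rho, forcing |omega0| <= Omega.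

  Conjugation by the Fourier transform rotates the coefficients by (t, omega) |-> (omega, -t)
  up to unimodular factors, so (3) and (4) are (1) and (2) for F^* T F.
*)

theory Submission
  imports Defs
begin

section \<open>\<open>L\<^sup>2\<close> estimates\<close>

definition tf_shift :: "'a::euclidean_space \<times> 'a \<Rightarrow> ('a \<Rightarrow> complex) \<Rightarrow> 'a \<Rightarrow> complex" where
  "tf_shift l f x = cis (snd l \<bullet> x) * f (x - fst l)"

definition L2_inner :: "('a::euclidean_space \<Rightarrow> complex) \<Rightarrow> ('a \<Rightarrow> complex) \<Rightarrow> complex" where
  "L2_inner f g = (\<integral>x. f x * cnj (g x) \<partial>lborel)"

lemma nn_integral_lborel_translate:
  fixes F :: "'a::euclidean_space \<Rightarrow> ennreal"
  assumes [measurable]: "F \<in> borel_measurable borel"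
  shows "(\<integral>\<^sup>+x. F (x + a) \<partial>lborel) = (\<integral>\<^sup>+x. F x \<partial>lborel)"
proof -
  have "(\<integral>\<^sup>+x. F x \<partial>lborel) = (\<integral>\<^sup>+x. F x \<partial>distr lborel borel ((+) a))"
    by (simp add: lborel_distr_plus)
  also have "\<dots> = (\<integral>\<^sup>+x. F (a + x) \<partial>lborel)"
    by (subst nn_integral_distr) auto
  finally show ?thesis by (simp add: add.commute)
qed

lemma integral_lborel_translate:
  fixes F :: "'a::euclidean_space \<Rightarrow> complex"
  assumes [measurable]: "F \<in> borel_measurable borel"
  shows "(\<integral>x. F (x + a) \<partial>lborel) = (\<integral>x. F x \<partial>lborel)"
proof -
  have "(\<integral>x. F x \<partial>lborel) = (\<integral>x. F x \<partial>distr lborel borel ((+) a))"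
    by (simp add: lborel_distr_plus)
  also have "\<dots> = (\<integral>x. F (a + x) \<partial>lborel)"
    by (subst integral_distr) auto
  finally show ?thesis by (simp add: add.commute)
qed

lemma L2_sq_translate:
  fixes h :: "'a::euclidean_space \<Rightarrow> complex"
  assumes [measurable]: "h \<in> borel_measurable borel"
  shows "L2_sq (\<lambda>x. h (x - t)) = L2_sq h"
  unfolding L2_sq_def
  using nn_integral_lborel_translate[of "\<lambda>x. ennreal ((norm (h x))\<^sup>2)" "-t"] by simp

lemma borel_measurable_cnj [measurable (raw)]:
  fixes f :: "'b \<Rightarrow> complex"
  assumes "f \<in> borel_measurable M"
  shows "(\<lambda>x. cnj (f x)) \<in> borel_measurable M"
  using continuous_on_cnj[OF continuous_on_id] assms by (rule borel_measurable_continuous_on)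

lemma borel_measurable_cis [measurable (raw)]:
  assumes "f \<in> borel_measurable M"
  shows "(\<lambda>x. cis (f x)) \<in> borel_measurable M"
  using continuous_on_cis[OF continuous_on_id] assms by (rule borel_measurable_continuous_on)

lemma L2_sq_cmult:
  fixes h :: "'a::euclidean_space \<Rightarrow> complex"
  assumes [measurable]: "h \<in> borel_measurable borel"
  shows "L2_sq (\<lambda>x. a * h x) = ennreal ((norm a)\<^sup>2) * L2_sq h"
proof -
  have "L2_sq (\<lambda>x. a * h x) = (\<integral>\<^sup>+x. ennreal ((norm a)\<^sup>2) * ennreal ((norm (h x))\<^sup>2) \<partial>lborel)"
    unfolding L2_sq_def by (simp add: norm_mult power_mult_distrib ennreal_mult)
  also have "\<dots> = ennreal ((norm a)\<^sup>2) * L2_sq h"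
    unfolding L2_sq_def by (rule nn_integral_cmult) simp
  finally show ?thesis .
qed

lemma measurable_tf_shift [measurable]:
  assumes [measurable]: "f \<in> borel_measurable borel"
  shows "tf_shift l f \<in> borel_measurable borel"
  unfolding tf_shift_def by measurable

lemma L2_sq_tf_shift:
  assumes "f \<in> borel_measurable borel"
  shows "L2_sq (tf_shift l f) = L2_sq f"
proof -
  have "L2_sq (tf_shift l f) = L2_sq (\<lambda>x. f (x - fst l))"
    unfolding L2_sq_def tf_shift_def by (simp add: norm_mult)
  with assms show ?thesis by (simp add: L2_sq_translate)
qed

lemma norm_integral_mult_cnj_le:
  fixes f g :: "'a::euclidean_space \<Rightarrow> complex"
  shows "ennreal (norm (\<integral>x. f x * cnj (g x) \<partial>lborel))
           \<le> (\<integral>\<^sup>+x. ennreal (norm (f x)) * ennreal (norm (g x)) \<partial>lborel)"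
proof (cases "integrable lborel (\<lambda>x. f x * cnj (g x))")
  case True
  then have "norm (\<integral>x. f x * cnj (g x) \<partial>lborel) \<le> (\<integral>\<^sup>+x. norm (f x * cnj (g x)) \<partial>lborel)"
    by (rule integral_norm_bound_ennreal)
  then show ?thesis
    by (simp add: norm_mult ennreal_mult)
qed (simp add: not_integrable_integral_eq)

lemma L2_Cauchy_Schwarz:
  fixes f g :: "'a::euclidean_space \<Rightarrow> complex"
  assumes [measurable]: "f \<in> borel_measurable borel" "g \<in> borel_measurable borel"
  shows "(\<integral>\<^sup>+x. ennreal (norm (f x)) * ennreal (norm (g x)) \<partial>lborel)\<^sup>2 \<le> L2_sq f * L2_sq g"
  using Cauchy_Schwarz_nn_integral[of "\<lambda>x. ennreal (norm (f x))" lborel "\<lambda>x. ennreal (norm (g x))"]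
  unfolding L2_sq_def by (simp add: ennreal_power)

lemma integrable_mult_cnj_L2:
  fixes f g :: "'a::euclidean_space \<Rightarrow> complex"
  assumes [measurable]: "f \<in> borel_measurable borel" "g \<in> borel_measurable borel"
    and "L2_sq f < \<infinity>" "L2_sq g < \<infinity>"
  shows "integrable lborel (\<lambda>x. f x * cnj (g x))"
proof (rule integrableI_bounded)
  have "(\<integral>\<^sup>+x. ennreal (norm (f x)) * ennreal (norm (g x)) \<partial>lborel)\<^sup>2 < \<infinity>"
    using L2_Cauchy_Schwarz[of f g] assms(3,4)
    by (simp add: ennreal_mult_less_top le_less_trans)
  then show "(\<integral>\<^sup>+x. ennreal (norm (f x * cnj (g x))) \<partial>lborel) < \<infinity>"
    by (simp add: norm_mult ennreal_mult power_less_top_ennreal)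
qed simp

lemma norm_L2_inner_sq_le:
  assumes "f \<in> borel_measurable borel" "g \<in> borel_measurable borel"
  shows "ennreal ((norm (L2_inner f g))\<^sup>2) \<le> L2_sq f * L2_sq g"
proof -
  have "ennreal ((norm (L2_inner f g))\<^sup>2) = (ennreal (norm (L2_inner f g)))\<^sup>2"
    by (simp add: ennreal_power)
  also have "\<dots> \<le> (\<integral>\<^sup>+x. ennreal (norm (f x)) * ennreal (norm (g x)) \<partial>lborel)\<^sup>2"
    unfolding L2_inner_def by (intro power_mono norm_integral_mult_cnj_le) simp
  also have "\<dots> \<le> L2_sq f * L2_sq g"
    using assms by (rule L2_Cauchy_Schwarz)
  finally show ?thesis .
qed

lemma norm_L2_inner_le:
  assumes "f \<in> borel_measurable borel" "g \<in> borel_measurable borel"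
    and "L2_sq f \<le> ennreal (a\<^sup>2)" "L2_sq g \<le> ennreal (b\<^sup>2)" "0 \<le> a" "0 \<le> b"
  shows "norm (L2_inner f g) \<le> a * b"
proof -
  have "ennreal ((norm (L2_inner f g))\<^sup>2) \<le> L2_sq f * L2_sq g"
    using assms(1,2) by (rule norm_L2_inner_sq_le)
  also have "\<dots> \<le> ennreal (a\<^sup>2) * ennreal (b\<^sup>2)"
    using assms(3,4) by (rule mult_mono) simp_all
  also have "\<dots> = ennreal ((a * b)\<^sup>2)"
    by (simp add: ennreal_mult[symmetric] power_mult_distrib)
  finally have "(norm (L2_inner f g))\<^sup>2 \<le> (a * b)\<^sup>2"
    by (auto simp: ennreal_le_iff2)
  then show ?thesis
    by (rule power2_le_imp_le) (use assms(5,6) in simp)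
qed

lemma L2_inner_diff_sum_left:
  assumes [measurable]: "\<And>l. u l \<in> borel_measurable borel" "G \<in> borel_measurable borel"
      "\<psi> \<in> borel_measurable borel"
    and "\<And>l. L2_sq (u l) < \<infinity>" "L2_sq G < \<infinity>" "L2_sq \<psi> < \<infinity>"
  shows "L2_inner (\<lambda>x. G x - (\<Sum>l\<in>F. u l x)) \<psi> = L2_inner G \<psi> - (\<Sum>l\<in>F. L2_inner (u l) \<psi>)"
proof -
  have int: "integrable lborel (\<lambda>x. u l x * cnj (\<psi> x))" "integrable lborel (\<lambda>x. G x * cnj (\<psi> x))" for l
    by (intro integrable_mult_cnj_L2; use assms in simp)+
  show ?thesis
    unfolding L2_inner_def left_diff_distrib sum_distrib_right
    by (simp add: int Bochner_Integration.integral_diff Bochner_Integration.integral_sum)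
qed

lemma has_sum_L2_inner_if_L2_has_sum:
  fixes u :: "'l \<Rightarrow> 'a::euclidean_space \<Rightarrow> complex"
  assumes sum: "L2_has_sum u G"
    and [measurable]: "\<And>l. u l \<in> borel_measurable borel" "G \<in> borel_measurable borel"
      "\<psi> \<in> borel_measurable borel"
    and fin: "\<And>l. L2_sq (u l) < \<infinity>" "L2_sq G < \<infinity>" "L2_sq \<psi> < \<infinity>"
  shows "((\<lambda>l. L2_inner (u l) \<psi>) has_sum L2_inner G \<psi>) UNIV"
proof -
  let ?F = "finite_subsets_at_top (UNIV :: 'l set)"
  let ?R = "\<lambda>F x. G x - (\<Sum>l\<in>F. u l x)"
  have bound_lim: "((\<lambda>F. L2_sq (?R F) * L2_sq \<psi>) \<longlongrightarrow> 0) ?F"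
    using tendsto_mult_ennreal[OF sum[unfolded L2_has_sum_def] tendsto_const[of "L2_sq \<psi>"]] fin(3)
    by simp
  have "((\<lambda>F. ennreal ((norm (L2_inner (?R F) \<psi>))\<^sup>2)) \<longlongrightarrow> 0) ?F"
  proof (rule tendsto_sandwich[of "\<lambda>_. 0" _ _ "\<lambda>F. L2_sq (?R F) * L2_sq \<psi>"])
    show "eventually (\<lambda>F. ennreal ((norm (L2_inner (?R F) \<psi>))\<^sup>2) \<le> L2_sq (?R F) * L2_sq \<psi>) ?F"
      by (intro always_eventually allI norm_L2_inner_sq_le) measurable
  qed (use bound_lim in simp_all)
  then have "((\<lambda>F. (norm (L2_inner (?R F) \<psi>))\<^sup>2) \<longlongrightarrow> 0) ?F"
    using tendsto_ennreal_iff[of "\<lambda>F. (norm (L2_inner (?R F) \<psi>))\<^sup>2" ?F 0] by simp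
  then have "((\<lambda>F. L2_inner (?R F) \<psi>) \<longlongrightarrow> 0) ?F"
    by (auto dest: tendsto_real_sqrt intro: tendsto_norm_zero_cancel)
  then have "((\<lambda>F. L2_inner G \<psi> - (\<Sum>l\<in>F. L2_inner (u l) \<psi>)) \<longlongrightarrow> 0) ?F"
    using fin by (simp add: L2_inner_diff_sum_left)
  from tendsto_diff[OF tendsto_const[of "L2_inner G \<psi>"] this] show ?thesis
    unfolding has_sum_def by simp
qed

lemma nn_integral_suminf_sq_le:
  fixes U :: "nat \<Rightarrow> 'b \<Rightarrow> ennreal" and v :: "nat \<Rightarrow> ennreal"
  assumes [measurable]: "\<And>n. U n \<in> borel_measurable M"
    and L: "\<And>n. (\<integral>\<^sup>+x. (U n x)\<^sup>2 \<partial>M) \<le> L"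
  shows "(\<integral>\<^sup>+x. (\<Sum>n. v n * U n x)\<^sup>2 \<partial>M) \<le> (\<Sum>n. v n)\<^sup>2 * L"
proof -
  have cross: "(\<integral>\<^sup>+x. U n x * U m x \<partial>M) \<le> L" for n m
  proof -
    have "2 * (\<integral>\<^sup>+x. U n x * U m x \<partial>M) = (\<integral>\<^sup>+x. 2 * U n x * U m x \<partial>M)"
      by (simp add: nn_integral_cmult mult.assoc)
    also have "\<dots> \<le> (\<integral>\<^sup>+x. (U n x)\<^sup>2 + (U m x)\<^sup>2 \<partial>M)"
      by (intro nn_integral_mono sum_of_squares_ge_ennreal)
    also have "\<dots> \<le> 2 * L"
      using add_mono[OF L L] by (simp add: nn_integral_add mult_2)
    finally show ?thesis
      by (simp add: ennreal_mult_le_mult_iff)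
  qed
  have square: "(\<Sum>n. a n)\<^sup>2 = (\<Sum>n. \<Sum>m. a n * a m)" for a :: "nat \<Rightarrow> ennreal"
    by (simp add: power2_eq_square)
  have "(\<integral>\<^sup>+x. (\<Sum>n. v n * U n x)\<^sup>2 \<partial>M) = (\<integral>\<^sup>+x. (\<Sum>n. \<Sum>m. (v n * v m) * (U n x * U m x)) \<partial>M)"
    unfolding square by (simp only: mult_ac)
  also have "\<dots> = (\<Sum>n. \<Sum>m. (v n * v m) * (\<integral>\<^sup>+x. U n x * U m x \<partial>M))"
    by (simp add: nn_integral_suminf nn_integral_cmult)
  also have "\<dots> \<le> (\<Sum>n. \<Sum>m. (v n * v m) * L)"
    by (intro suminf_le summableI allI mult_left_mono cross) auto
  also have "\<dots> = (\<Sum>n. v n)\<^sup>2 * L"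
    unfolding square by simp
  finally show ?thesis .
qed

lemma norm_suminf_diff_sum_le:
  fixes h :: "nat \<Rightarrow> 'b::banach"
  assumes h: "summable (\<lambda>n. norm (h n))" and I: "finite I" "{..<N} \<subseteq> I"
  shows "norm ((\<Sum>n. h n) - (\<Sum>n\<in>I. h n)) \<le> (\<Sum>n. norm (h (n + N)))"
proof -
  have out_I: "summable (\<lambda>n. norm (if n \<in> I then 0 else h n))"
    by (rule summable_comparison_test[OF _ h]) auto
  have out_N: "summable (\<lambda>n. if n < N then 0 else norm (h n))"
    by (rule summable_comparison_test[OF _ h]) auto
  have "(\<Sum>n. h n) - (\<Sum>n\<in>I. h n) = (\<Sum>n. h n - (if n \<in> I then h n else 0))"
    using sums_unique[OF sums_diff[OF summable_sums[OF summable_norm_cancel[OF h]]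
        sums_If_finite_set[OF I(1)]]] by simp
  also have "\<dots> = (\<Sum>n. if n \<in> I then 0 else h n)"
    by (intro suminf_cong) simp
  finally have "norm ((\<Sum>n. h n) - (\<Sum>n\<in>I. h n)) \<le> (\<Sum>n. norm (if n \<in> I then 0 else h n))"
    using summable_norm[OF out_I] by simp
  also have "\<dots> \<le> (\<Sum>n. if n < N then 0 else norm (h n))"
    by (rule suminf_le[OF _ out_I out_N]) (use I(2) in auto)
  also have "\<dots> = (\<Sum>n. norm (h n) - (if n \<in> {..<N} then norm (h n) else 0))"
    by (intro suminf_cong) simp
  also have "\<dots> = (\<Sum>n. norm (h (n + N)))"
    using sums_unique[OF sums_diff[OF summable_sums[OF h] sums_If_finite_set[of "{..<N}"]]]
    by (simp add: suminf_minus_initial_segment[OF h])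
  finally show ?thesis .
qed

lemma L2_sq_suminf_remainder_le:
  fixes h :: "nat \<Rightarrow> 'a::euclidean_space \<Rightarrow> complex" and U :: "nat \<Rightarrow> 'a \<Rightarrow> real"
  assumes [measurable]: "\<And>n. h n \<in> borel_measurable borel" "\<And>n. U n \<in> borel_measurable borel"
    and dom: "\<And>n x. norm (h n x) \<le> w n * U n x" "\<And>n x. 0 \<le> U n x"
    and w: "\<And>n. 0 \<le> w n" "summable w"
    and L: "\<And>n. (\<integral>\<^sup>+x. ennreal ((U n x)\<^sup>2) \<partial>lborel) \<le> L" "L < \<infinity>"
    and I: "finite I" "{..<N} \<subseteq> I"
  shows "L2_sq (\<lambda>x. (\<Sum>n. h n x) - (\<Sum>n\<in>I. h n x)) \<le> ennreal ((\<Sum>n. w (n + N))\<^sup>2) * L"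
proof -
  define T where "T x = (\<Sum>n. ennreal (w (n + N)) * ennreal (U (n + N) x))" for x
  have "(\<integral>\<^sup>+x. (T x)\<^sup>2 \<partial>lborel) \<le> (\<Sum>n. ennreal (w (n + N)))\<^sup>2 * L"
    unfolding T_def using L(1) dom(2)
    by (intro nn_integral_suminf_sq_le) (simp_all add: ennreal_power)
  also have "(\<Sum>n. ennreal (w (n + N))) = ennreal (\<Sum>n. w (n + N))"
    using w by (intro suminf_ennreal2) auto
  finally have T_int: "(\<integral>\<^sup>+x. (T x)\<^sup>2 \<partial>lborel) \<le> ennreal ((\<Sum>n. w (n + N))\<^sup>2) * L"
    using w by (simp add: ennreal_power suminf_nonneg)
  have tail_le_T: "(\<Sum>n. ennreal (norm (h (n + N) x))) \<le> T x" for x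
    unfolding T_def
    by (intro suminf_le summableI) (use dom w in \<open>auto simp: ennreal_mult[symmetric]\<close>)
  have "(\<integral>\<^sup>+x. (T x)\<^sup>2 \<partial>lborel) < \<infinity>"
    using T_int L(2) by (simp add: ennreal_mult_less_top le_less_trans)
  then have "AE x in lborel. (T x)\<^sup>2 \<noteq> \<infinity>"
    by (intro nn_integral_PInf_AE) (auto simp: T_def)
  then have "AE x in lborel. ennreal ((norm ((\<Sum>n. h n x) - (\<Sum>n\<in>I. h n x)))\<^sup>2) \<le> (T x)\<^sup>2"
  proof eventually_elim
    case (elim x)
    then have "(\<Sum>n. ennreal (norm (h (n + N) x))) \<noteq> \<infinity>"
      using tail_le_T[of x] by (auto simp: power_eq_top_ennreal top_unique)
    then have "summable (\<lambda>n. norm (h n x))"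
      using summable_suminf_not_top[of "\<lambda>n. norm (h (n + N) x)"]
        summable_iff_shift[of "\<lambda>n. norm (h n x)" N] by auto
    then have "norm ((\<Sum>n. h n x) - (\<Sum>n\<in>I. h n x)) \<le> (\<Sum>n. norm (h (n + N) x))"
      using I by (intro norm_suminf_diff_sum_le)
    then have "ennreal (norm ((\<Sum>n. h n x) - (\<Sum>n\<in>I. h n x))) \<le> (\<Sum>n. ennreal (norm (h (n + N) x)))"
      using \<open>summable (\<lambda>n. norm (h n x))\<close>
        summable_iff_shift[of "\<lambda>n. norm (h n x)" N] by (simp add: suminf_ennreal2 ennreal_leI)
    also note tail_le_T
    finally show ?case
      by (simp add: ennreal_power[symmetric] power_mono_ennreal)
  qed
  then have "L2_sq (\<lambda>x. (\<Sum>n. h n x) - (\<Sum>n\<in>I. h n x)) \<le> (\<integral>\<^sup>+x. (T x)\<^sup>2 \<partial>lborel)"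
    unfolding L2_sq_def by (rule nn_integral_mono_AE)
  with T_int show ?thesis by simp
qed

lemma L2_has_sum_suminf_reindex:
  fixes u :: "'l \<Rightarrow> 'a::euclidean_space \<Rightarrow> complex" and e :: "nat \<Rightarrow> 'l"
  assumes e: "inj e" "\<And>l x. l \<notin> range e \<Longrightarrow> u l x = 0"
    and [measurable]: "\<And>n. u (e n) \<in> borel_measurable borel" "\<And>n. U n \<in> borel_measurable borel"
    and dom: "\<And>n x. norm (u (e n) x) \<le> w n * U n x" "\<And>n x. 0 \<le> U n x"
    and w: "\<And>n. 0 \<le> w n" "summable w"
    and L: "\<And>n. (\<integral>\<^sup>+x. ennreal ((U n x)\<^sup>2) \<partial>lborel) \<le> L" "L < \<infinity>"
  shows "L2_has_sum u (\<lambda>x. \<Sum>n. u (e n) x)"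
  unfolding L2_has_sum_def
proof (rule order_tendstoI)
  fix a :: ennreal assume "0 < a"
  have "(\<lambda>N. \<Sum>n. w (n + N)) \<longlonglongrightarrow> (\<Sum>n. w n) - (\<Sum>n. w n)"
    unfolding suminf_minus_initial_segment[OF w(2)]
    by (intro tendsto_diff tendsto_const summable_LIMSEQ w(2))
  then have "(\<lambda>N. ennreal ((\<Sum>n. w (n + N))\<^sup>2) * L) \<longlonglongrightarrow> ennreal (0\<^sup>2) * L"
    using L(2) by (intro tendsto_mult_ennreal tendsto_ennrealI tendsto_power) auto
  from order_tendstoD(2)[OF this] \<open>0 < a\<close>
  obtain N where N: "ennreal ((\<Sum>n. w (n + N))\<^sup>2) * L < a"
    by (auto simp: eventually_sequentially)
  show "eventually (\<lambda>F. L2_sq (\<lambda>x. (\<Sum>n. u (e n) x) - (\<Sum>l\<in>F. u l x)) < a)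
          (finite_subsets_at_top UNIV)"
    unfolding eventually_finite_subsets_at_top
  proof (intro exI[of _ "e ` {..<N}"] conjI allI impI)
    fix Y assume Y: "finite Y \<and> e ` {..<N} \<subseteq> Y \<and> Y \<subseteq> UNIV"
    have sum_Y: "(\<Sum>l\<in>Y. u l x) = (\<Sum>n\<in>e -` Y. u (e n) x)" for x
    proof -
      have "(\<Sum>l\<in>Y. u l x) = (\<Sum>l\<in>e ` (e -` Y). u l x)"
        by (rule sum.mono_neutral_right) (use Y e in auto)
      also have "\<dots> = (\<Sum>n\<in>e -` Y. u (e n) x)"
        by (subst sum.reindex) (use e(1) in \<open>auto simp: inj_on_def\<close>)
      finally show ?thesis .
    qed
    have "L2_sq (\<lambda>x. (\<Sum>n. u (e n) x) - (\<Sum>n\<in>e -` Y. u (e n) x))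
            \<le> ennreal ((\<Sum>n. w (n + N))\<^sup>2) * L"
      using Y e(1)
      by (intro L2_sq_suminf_remainder_le[where U = U] dom w L) (auto intro: finite_vimageI)
    with N show "L2_sq (\<lambda>x. (\<Sum>n. u (e n) x) - (\<Sum>l\<in>Y. u l x)) < a"
      unfolding sum_Y by simp
  qed auto
qed simp

section \<open>The extension under a frequency bound\<close>

lemma infinite_UNIV_euclidean_space: "infinite (UNIV :: 'a::euclidean_space set)"
proof
  assume "finite (UNIV :: 'a set)"
  obtain b :: 'a where b: "b \<in> Basis" using nonempty_Basis by blast
  have "inj (\<lambda>r::real. r *\<^sub>R b)"
    using b by (auto simp: inj_on_def nonzero_Basis)
  with \<open>finite (UNIV :: 'a set)\<close> have "finite (UNIV :: real set)"
    by (metis finite_imageD finite_subset subset_UNIV)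
  then show False
    using infinite_UNIV_char_0 by blast
qed

lemma countable_subset_range_inj:
  fixes S :: "'l set"
  assumes "countable S" "infinite (UNIV :: 'l set)"
  obtains e :: "nat \<Rightarrow> 'l" where "inj e" "S \<subseteq> range e"
proof -
  obtain f :: "nat \<Rightarrow> 'l" where "inj f"
    using infinite_countable_subset[OF assms(2)] by blast
  then have "infinite (S \<union> range f)"
    using range_inj_infinite by blast
  moreover have "countable (S \<union> range f)"
    using assms(1) by simp
  ultimately have "bij_betw (from_nat_into (S \<union> range f)) UNIV (S \<union> range f)"
    by (rule bij_betw_from_nat_into[rotated])
  then show ?thesis
    by (intro that[of "from_nat_into (S \<union> range f)"]) (auto simp: bij_betw_def)
qed

lemma has_sum_iff_has_sum_reindex:
  assumes "inj e" "\<And>l. l \<notin> range e \<Longrightarrow> u l = 0"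
  shows "(u has_sum s) UNIV \<longleftrightarrow> ((\<lambda>n. u (e n)) has_sum s) UNIV"
proof -
  have "(u has_sum s) UNIV \<longleftrightarrow> (u has_sum s) (range e)"
    by (rule has_sum_cong_neutral) (use assms in auto)
  also have "\<dots> \<longleftrightarrow> ((u \<circ> e) has_sum s) UNIV"
    by (rule has_sum_reindex) (use assms in \<open>auto intro: inj_on_subset\<close>)
  finally show ?thesis by (simp add: o_def)
qed

lemma ext_term_eq_tf_shift:
  "ext_term c f l x y = c l * exp (- (snd l \<bullet> y)) * tf_shift l (\<lambda>x. f x y) x"
proof -
  have "exp (\<i> * (complex_of_real (snd l \<bullet> x) + \<i> * complex_of_real (snd l \<bullet> y)))
      = exp (- (snd l \<bullet> y)) * cis (snd l \<bullet> x)"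
    by (simp add: cis_conv_exp algebra_simps exp_add[symmetric] exp_of_real[symmetric])
  then show ?thesis
    unfolding ext_term_def tf_shift_def by (simp add: mult_ac)
qed

lemma norm_ext_term:
  "norm (ext_term c f l x y) = norm (c l) * exp (- (snd l \<bullet> y)) * norm (f (x - fst l) y)"
  unfolding ext_term_def by (simp add: norm_mult)

lemma measurable_ext_term [measurable]:
  assumes [measurable]: "(\<lambda>x. f x y) \<in> borel_measurable borel"
  shows "(\<lambda>x. ext_term c f l x y) \<in> borel_measurable borel"
  unfolding ext_term_eq_tf_shift by measurable

lemma ext_term_series_L2:
  fixes c :: "'a::euclidean_space \<times> 'a \<Rightarrow> complex" and e :: "nat \<Rightarrow> 'a \<times> 'a"
  assumes e: "inj e" "\<And>l. c l \<noteq> 0 \<Longrightarrow> l \<in> range e"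
    and K: "\<And>l. c l \<noteq> 0 \<Longrightarrow> exp (- (snd l \<bullet> y)) \<le> K" "0 \<le> K"
    and W: "(\<lambda>n. norm (c (e n))) sums W"
    and [measurable]: "(\<lambda>x. f x y) \<in> borel_measurable borel" and f_L2: "L2_sq (\<lambda>x. f x y) < \<infinity>"
  shows "L2_has_sum (\<lambda>l x. ext_term c f l x y) (\<lambda>x. \<Sum>n. ext_term c f (e n) x y)"
    and "L2_sq (\<lambda>x. \<Sum>n. ext_term c f (e n) x y) \<le> ennreal ((W * K)\<^sup>2) * L2_sq (\<lambda>x. f x y)"
proof -
  define w where "w n = norm (c (e n)) * K" for n
  define U where "U n x = norm (f (x - fst (e n)) y)" for n x
  have w: "\<And>n. 0 \<le> w n" "w sums (W * K)"
    unfolding w_def using K(2) W by (auto intro: sums_mult2)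
  have dom: "norm (ext_term c f (e n) x y) \<le> w n * U n x" for n x
  proof (cases "c (e n) = 0")
    case False
    then show ?thesis
      unfolding norm_ext_term w_def U_def using K(1)
      by (intro mult_right_mono mult_left_mono) auto
  qed (simp add: ext_term_def w_def U_def)
  have U_L2: "(\<integral>\<^sup>+x. ennreal ((U n x)\<^sup>2) \<partial>lborel) \<le> L2_sq (\<lambda>x. f x y)" for n
    using L2_sq_translate[of "\<lambda>x. f x y" "fst (e n)"] by (simp add: U_def L2_sq_def)
  have [measurable]: "U n \<in> borel_measurable borel" for n
    unfolding U_def by measurable
  have zero: "ext_term c f l x y = 0" if "l \<notin> range e" for l x
    using e(2)[of l] that by (auto simp: ext_term_def)
  show "L2_has_sum (\<lambda>l x. ext_term c f l x y) (\<lambda>x. \<Sum>n. ext_term c f (e n) x y)"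
    by (rule L2_has_sum_suminf_reindex[where U = U and w = w])
       (use e(1) zero dom w U_L2 f_L2 in \<open>auto simp: U_def sums_iff\<close>)
  have "L2_sq (\<lambda>x. (\<Sum>n. ext_term c f (e n) x y) - (\<Sum>n\<in>{}. ext_term c f (e n) x y))
          \<le> ennreal ((\<Sum>n. w (n + 0))\<^sup>2) * L2_sq (\<lambda>x. f x y)"
    by (rule L2_sq_suminf_remainder_le[where U = U])
       (use dom w U_L2 f_L2 in \<open>auto simp: U_def sums_iff\<close>)
  then show "L2_sq (\<lambda>x. \<Sum>n. ext_term c f (e n) x y) \<le> ennreal ((W * K)\<^sup>2) * L2_sq (\<lambda>x. f x y)"
    using w(2) by (simp add: sums_iff)
qed

lemma countable_tf_supp: "in_algebra_A c \<Longrightarrow> countable (tf_supp c)"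
  unfolding in_algebra_A_def tf_supp_def
  using summable_countable_real[of "\<lambda>l. norm (c l)" UNIV] by simp

lemma obtain_tf_supp_enumeration:
  fixes c :: "'a::euclidean_space \<times> 'a \<Rightarrow> complex"
  assumes A: "in_algebra_A c"
  obtains e :: "nat \<Rightarrow> 'a \<times> 'a"
  where "inj e" "\<And>l. c l \<noteq> 0 \<Longrightarrow> l \<in> range e" "(\<lambda>n. norm (c (e n))) sums A_norm c"
proof -
  obtain e :: "nat \<Rightarrow> 'a \<times> 'a" where e: "inj e" "tf_supp c \<subseteq> range e"
    using countable_subset_range_inj[OF countable_tf_supp[OF A] infinite_UNIV_euclidean_space] .
  have "((\<lambda>l. norm (c l)) has_sum A_norm c) UNIV"
    using A unfolding in_algebra_A_def A_norm_def by (rule has_sum_infsum)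
  moreover have "norm (c l) = 0" if "l \<notin> range e" for l
    using e(2) that by (auto simp: tf_supp_def)
  ultimately have "(\<lambda>n. norm (c (e n))) sums A_norm c"
    by (simp add: has_sum_iff_has_sum_reindex[OF e(1)] has_sum_imp_sums)
  with e show thesis
    by (intro that) (auto simp: tf_supp_def)
qed

lemma L2_sq_le_L2inf_sq: "y \<in> cball 0 \<rho> \<Longrightarrow> L2_sq (\<lambda>x. f x y) \<le> L2inf_sq \<rho> f"
  unfolding L2inf_sq_def by (rule SUP_upper)

lemma L2inf_sq_le_cmult:
  assumes "\<And>y. y \<in> cball 0 \<rho> \<Longrightarrow> L2_sq (\<lambda>x. g x y) \<le> C * L2_sq (\<lambda>x. f x y)"
  shows "L2inf_sq \<rho> g \<le> C * L2inf_sq \<rho> f"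
  unfolding L2inf_sq_def[of \<rho> g]
proof (rule SUP_least)
  fix y :: 'a assume y: "y \<in> cball 0 \<rho>"
  have "L2_sq (\<lambda>x. g x y) \<le> C * L2_sq (\<lambda>x. f x y)"
    using assms[OF y] .
  also have "\<dots> \<le> C * L2inf_sq \<rho> f"
    by (intro mult_left_mono L2_sq_le_L2inf_sq y) simp
  finally show "L2_sq (\<lambda>x. g x y) \<le> C * L2inf_sq \<rho> f" .
qed

lemma exp_minus_inner_le:
  assumes "norm w \<le> \<Omega>" "norm y \<le> \<rho>" "0 \<le> \<Omega>"
  shows "exp (- (w \<bullet> y)) \<le> exp (\<rho> * \<Omega>)"
proof -
  have "- (w \<bullet> y) \<le> norm w * norm y"
    using norm_cauchy_schwarz[of "- w" y] by simp
  also have "\<dots> \<le> \<Omega> * \<rho>"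
    using assms by (intro mult_mono) auto
  finally show ?thesis by (simp add: mult.commute)
qed

lemma extends_bounded_if_tf_supp_bounded:
  fixes c :: "'a::euclidean_space \<times> 'a \<Rightarrow> complex"
  assumes A: "in_algebra_A c" and supp: "tf_supp c \<subseteq> UNIV \<times> cball 0 \<Omega>" and "0 \<le> \<Omega>"
  shows "extends_bounded \<rho> c (A_norm c * exp (\<rho> * \<Omega>))"
  unfolding extends_bounded_def
proof (intro allI impI)
  fix f :: "'a \<Rightarrow> 'a \<Rightarrow> complex"
  assume f: "in_X \<rho> f"
  obtain e :: "nat \<Rightarrow> 'a \<times> 'a"
    where e: "inj e" "\<And>l. c l \<noteq> 0 \<Longrightarrow> l \<in> range e" and W: "(\<lambda>n. norm (c (e n))) sums A_norm c"
    using obtain_tf_supp_enumeration[OF A] by blast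
  have K: "exp (- (snd l \<bullet> y)) \<le> exp (\<rho> * \<Omega>)" if "y \<in> cball 0 \<rho>" "c l \<noteq> 0" for l y
    using supp that \<open>0 \<le> \<Omega>\<close> by (intro exp_minus_inner_le) (auto simp: tf_supp_def)
  define g where "g x y = (\<Sum>n. ext_term c f (e n) x y)" for x y
  have f_y: "(\<lambda>x. f x y) \<in> borel_measurable borel" "L2_sq (\<lambda>x. f x y) < \<infinity>"
    if "y \<in> cball 0 \<rho>" for y
    using f L2_sq_le_L2inf_sq[OF that, of f] that unfolding in_X_def by (simp_all add: le_less_trans)
  have series: "L2_has_sum (\<lambda>l x. ext_term c f l x y) (\<lambda>x. g x y)"
      "L2_sq (\<lambda>x. g x y) \<le> ennreal ((A_norm c * exp (\<rho> * \<Omega>))\<^sup>2) * L2_sq (\<lambda>x. f x y)"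
    if "y \<in> cball 0 \<rho>" for y
    unfolding g_def using ext_term_series_L2[where f = f and y = y and K = "exp (\<rho> * \<Omega>)",
        OF e K[OF that] exp_ge_zero W f_y[OF that]] by simp_all
  have g_bound: "L2inf_sq \<rho> g \<le> ennreal ((A_norm c * exp (\<rho> * \<Omega>))\<^sup>2) * L2inf_sq \<rho> f"
    by (rule L2inf_sq_le_cmult) (rule series(2))
  have "in_X \<rho> g"
    unfolding in_X_def
  proof (intro conjI ballI)
    show "(\<lambda>x. g x y) \<in> borel_measurable lborel" if "y \<in> cball 0 \<rho>" for y
      using f_y(1)[OF that] unfolding g_def by measurable
    show "L2inf_sq \<rho> g < \<infinity>"
      using g_bound f unfolding in_X_def by (simp add: ennreal_mult_less_top le_less_trans)
  qed
  then show "\<exists>g. in_X \<rho> g \<and> (\<forall>y\<in>cball 0 \<rho>. L2_has_sum (\<lambda>l x. ext_term c f l x y) (\<lambda>x. g x y))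
            \<and> L2inf_sq \<rho> g \<le> ennreal ((A_norm c * exp (\<rho> * \<Omega>))\<^sup>2) * L2inf_sq \<rho> f"
    using series(1) g_bound by (intro exI[of _ g]) simp
qed

section \<open>Time-frequency shifts of the unit cube\<close>

lemma tf_shift_tf_shift:
  "tf_shift l (tf_shift z f) x = cis (snd l \<bullet> x + snd z \<bullet> (x - fst l)) * f (x - fst l - fst z)"
  by (simp add: tf_shift_def mult.assoc[symmetric] cis_mult)

lemma tf_shift_tf_shift_mult_cnj:
  "tf_shift l (tf_shift z f) (x + fst z) * cnj (tf_shift m (tf_shift z f) (x + fst z))
     = cis ((snd l - snd m, fst m - fst l) \<bullet> z) * (tf_shift l f x * cnj (tf_shift m f x))"
proof -
  have phase: "cis (snd l \<bullet> (x + fst z) + snd z \<bullet> (x + fst z - fst l))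
          * cnj (cis (snd m \<bullet> (x + fst z) + snd z \<bullet> (x + fst z - fst m)))
      = cis ((snd l - snd m, fst m - fst l) \<bullet> z) * (cis (snd l \<bullet> x) * cnj (cis (snd m \<bullet> x)))"
    unfolding cis_cnj cis_mult
    by (rule arg_cong[where f = cis], cases z)
       (simp add: inner_Pair inner_diff_left inner_diff_right inner_add_right inner_commute)
  have "tf_shift l (tf_shift z f) (x + fst z) * cnj (tf_shift m (tf_shift z f) (x + fst z))
      = cis (snd l \<bullet> (x + fst z) + snd z \<bullet> (x + fst z - fst l))
          * cnj (cis (snd m \<bullet> (x + fst z) + snd z \<bullet> (x + fst z - fst m)))
          * (f (x - fst l) * cnj (f (x - fst m)))"
    unfolding tf_shift_tf_shift by (simp add: mult_ac)
  also have "\<dots> = cis ((snd l - snd m, fst m - fst l) \<bullet> z) * (tf_shift l f x * cnj (tf_shift m f x))"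
    unfolding phase by (simp add: tf_shift_def mult_ac)
  finally show ?thesis .
qed

lemma L2_inner_tf_shift_tf_shift:
  assumes [measurable]: "f \<in> borel_measurable borel"
  shows "L2_inner (tf_shift l (tf_shift z f)) (tf_shift m (tf_shift z f))
           = cis ((snd l - snd m, fst m - fst l) \<bullet> z) * L2_inner (tf_shift l f) (tf_shift m f)"
proof -
  have "L2_inner (tf_shift l (tf_shift z f)) (tf_shift m (tf_shift z f))
      = (\<integral>x. tf_shift l (tf_shift z f) (x + fst z) * cnj (tf_shift m (tf_shift z f) (x + fst z)) \<partial>lborel)"
    unfolding L2_inner_def by (rule integral_lborel_translate[symmetric]) measurable
  also have "\<dots> = cis ((snd l - snd m, fst m - fst l) \<bullet> z) * L2_inner (tf_shift l f) (tf_shift m f)"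
    unfolding tf_shift_tf_shift_mult_cnj L2_inner_def by simp
  finally show ?thesis .
qed

definition cube_indicator :: "'a::euclidean_space \<Rightarrow> complex" where
  "cube_indicator x = of_real (indicator (cbox 0 One) x)"

lemma measurable_cube_indicator [measurable]: "cube_indicator \<in> borel_measurable borel"
  unfolding cube_indicator_def by measurable

lemma L2_sq_cube_indicator: "L2_sq (cube_indicator :: 'a::euclidean_space \<Rightarrow> complex) = 1"
proof -
  have "L2_sq (cube_indicator :: 'a \<Rightarrow> complex) = (\<integral>\<^sup>+x. indicator (cbox (0::'a) One) x \<partial>lborel)"
    unfolding L2_sq_def cube_indicator_def by (intro nn_integral_cong) (simp add: indicator_def)
  also have "\<dots> = 1" by (simp add: emeasure_lborel_cbox_eq)
  finally show ?thesis .
qed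

lemma L2_inner_tf_shift_cube_indicator_self:
  "L2_inner (tf_shift l cube_indicator) (tf_shift l (cube_indicator :: 'a::euclidean_space \<Rightarrow> complex)) = 1"
proof -
  have "L2_inner (tf_shift l cube_indicator) (tf_shift l cube_indicator)
      = (\<integral>x. cube_indicator (x - fst l) \<partial>lborel :: complex)"
    unfolding L2_inner_def tf_shift_def
    by (intro Bochner_Integration.integral_cong)
       (auto simp: cube_indicator_def indicator_def cis_cnj cis_mult)
  also have "\<dots> = (\<integral>x. (cube_indicator :: 'a \<Rightarrow> complex) x \<partial>lborel)"
    using integral_lborel_translate[of cube_indicator "- fst l"] by simp
  also have "\<dots> = 1"
    by (simp add: cube_indicator_def measure_def emeasure_lborel_cbox_eq)
  finally show ?thesis .
qed

section \<open>Recovering a coefficient from bounded power sums\<close>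

definition power_mean :: "nat \<Rightarrow> complex \<Rightarrow> complex" where
  "power_mean N w = (\<Sum>n<N. w ^ n) / of_nat N"

lemma power_mean_tendsto_0:
  assumes "norm w = 1" "w \<noteq> 1"
  shows "(\<lambda>N. power_mean N w) \<longlonglongrightarrow> 0"
proof (rule Lim_null_comparison)
  have "norm (power_mean N w) \<le> (2 / norm (1 - w)) / real N" for N
  proof -
    have "norm (1 - w ^ N) \<le> 2"
      using norm_triangle_ineq4[of 1 "w ^ N"] assms(1) by (simp add: norm_power)
    then have "norm (\<Sum>n<N. w ^ n) \<le> 2 / norm (1 - w)"
      using assms by (simp add: sum_gp_strict norm_divide divide_right_mono)
    then have "norm (\<Sum>n<N. w ^ n) / real N \<le> (2 / norm (1 - w)) / real N"
      by (rule divide_right_mono) simp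
    then show ?thesis by (simp add: power_mean_def norm_divide)
  qed
  then show "eventually (\<lambda>N. norm (power_mean N w) \<le> (2 / norm (1 - w)) / real N) sequentially"
    by simp
  show "(\<lambda>N. (2 / norm (1 - w)) / real N) \<longlonglongrightarrow> 0"
    by (rule lim_const_over_n)
qed

lemma norm_power_mean_le:
  assumes "norm w = 1" "0 < N"
  shows "norm (power_mean N w) \<le> 1"
proof -
  have "norm (\<Sum>n<N. w ^ n) \<le> (\<Sum>n<N. norm (w ^ n))" by (rule norm_sum)
  also have "\<dots> = of_nat N" using assms(1) by (simp add: norm_power)
  finally show ?thesis using assms(2) by (simp add: power_mean_def norm_divide)
qed

lemma suminf_mult_power_mean:
  fixes d z :: "nat \<Rightarrow> complex"
  assumes d: "summable (\<lambda>k. norm (d k))" and z: "\<And>k. norm (z k) = 1"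
  shows "(\<Sum>k. d k * power_mean N (z k)) = (\<Sum>n<N. \<Sum>k. d k * z k ^ n) / of_nat N"
proof -
  have summable_powers: "summable (\<lambda>k. d k * z k ^ n)" for n
    by (rule summable_norm_cancel, rule summable_comparison_test[OF _ d])
       (simp add: norm_mult norm_power z)
  have "(\<Sum>k. d k * power_mean N (z k)) = (\<Sum>k. (\<Sum>n<N. d k * z k ^ n) / of_nat N)"
    by (simp add: power_mean_def sum_distrib_left)
  also have "\<dots> = (\<Sum>k. \<Sum>n<N. d k * z k ^ n) / of_nat N"
    by (intro suminf_divide summable_sum summable_powers)
  also have "\<dots> = (\<Sum>n<N. \<Sum>k. d k * z k ^ n) / of_nat N"
    by (subst suminf_sum) (auto intro: summable_powers)
  finally show ?thesis .
qed

lemma suminf_mult_power_mean_tendsto: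
  fixes d z :: "nat \<Rightarrow> complex"
  assumes d: "summable (\<lambda>k. norm (d k))"
    and z: "\<And>k. norm (z k) = 1" "z k0 = 1" "\<And>k. k \<noteq> k0 \<Longrightarrow> d k \<noteq> 0 \<Longrightarrow> z k \<noteq> 1"
  shows "(\<lambda>N. \<Sum>k. d k * power_mean N (z k)) \<longlonglongrightarrow> d k0"
proof -
  have "(\<lambda>N. \<Sum>k. d k * power_mean N (z k)) \<longlonglongrightarrow> (\<Sum>k. if k = k0 then d k0 else 0)"
  proof (rule tannerys_theorem[THEN conjunct2, THEN conjunct2, of _ _ _ "\<lambda>k. norm (d k)"])
    fix k
    show "(\<lambda>N. d k * power_mean N (z k)) \<longlonglongrightarrow> (if k = k0 then d k0 else 0)"
    proof (cases "k = k0 \<or> d k = 0")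
      case True
      have "eventually (\<lambda>N. d k * power_mean N (z k) = (if k = k0 then d k0 else 0)) sequentially"
        using eventually_gt_at_top[of 0]
        by eventually_elim (use True z(2) in \<open>auto simp: power_mean_def\<close>)
      then show ?thesis by (rule tendsto_eventually)
    next
      case False
      then have "(\<lambda>N. d k * power_mean N (z k)) \<longlonglongrightarrow> d k * 0"
        by (intro tendsto_mult tendsto_const power_mean_tendsto_0 z) auto
      with False show ?thesis by simp
    qed
  next
    have "eventually (\<lambda>(k, N). (0::nat) < N) (at_top \<times>\<^sub>F sequentially)"
      unfolding eventually_prod_filter
      by (intro exI[of _ "\<lambda>_. True"] exI[of _ "\<lambda>N. 0 < N"]) (auto intro: eventually_gt_at_top)
    then show "eventually (\<lambda>(k, N). norm (d k * power_mean N (z k)) \<le> norm (d k))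
        (at_top \<times>\<^sub>F sequentially)"
      by eventually_elim (auto simp: norm_mult intro!: mult_left_le norm_power_mean_le z(1))
  qed (use d in auto)
  moreover have "(\<Sum>k. if k = k0 then d k0 else 0) = d k0"
    by (subst suminf_finite[of "{k0}"]) auto
  ultimately show ?thesis by simp
qed

lemma norm_le_if_bounded_power_sums:
  fixes d z :: "nat \<Rightarrow> complex"
  assumes d: "summable (\<lambda>k. norm (d k))"
    and z: "\<And>k. norm (z k) = 1" "z k0 = 1" "\<And>k. k \<noteq> k0 \<Longrightarrow> d k \<noteq> 0 \<Longrightarrow> z k \<noteq> 1"
    and bound: "\<And>n. norm (\<Sum>k. d k * z k ^ n) \<le> B"
  shows "norm (d k0) \<le> B"
proof (rule LIMSEQ_le_const2[OF tendsto_norm])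
  show "(\<lambda>N. \<Sum>k. d k * power_mean N (z k)) \<longlonglongrightarrow> d k0"
    using d z by (rule suminf_mult_power_mean_tendsto)
  have "norm (\<Sum>k. d k * power_mean N (z k)) \<le> B" if "0 < N" for N
  proof -
    have "norm (\<Sum>k. d k * power_mean N (z k)) = norm (\<Sum>n<N. \<Sum>k. d k * z k ^ n) / N"
      by (simp add: suminf_mult_power_mean[OF d z(1)] norm_divide)
    also have "\<dots> \<le> (\<Sum>n<N. B) / N"
      by (intro divide_right_mono order.trans[OF norm_sum sum_mono] bound) simp
    finally show ?thesis using that by simp
  qed
  then show "\<exists>N. \<forall>n\<ge>N. norm (\<Sum>k. d k * power_mean n (z k)) \<le> B"
    by (intro exI[of _ 1]) auto
qed

lemma norm_le_if_bounded_power_sums_has_sum: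
  fixes d \<zeta> :: "'l \<Rightarrow> complex" and Z :: "nat \<Rightarrow> complex"
  assumes "infinite (UNIV :: 'l set)"
    and \<zeta>: "\<And>l. norm (\<zeta> l) = 1" "\<zeta> l0 = 1" "\<And>l. l \<noteq> l0 \<Longrightarrow> d l \<noteq> 0 \<Longrightarrow> \<zeta> l \<noteq> 1"
    and Z: "\<And>n. ((\<lambda>l. d l * \<zeta> l ^ n) has_sum Z n) UNIV" "\<And>n. norm (Z n) \<le> B"
  shows "norm (d l0) \<le> B"
proof -
  have "d summable_on UNIV"
    using Z(1)[of 0] by (auto simp: summable_on_def)
  then have abs: "(\<lambda>l. norm (d l)) summable_on UNIV"
    using summable_on_iff_abs_summable_on_complex by blast
  then have "countable (insert l0 {l. d l \<noteq> 0})"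
    using summable_countable_real[of "\<lambda>l. norm (d l)" UNIV] by simp
  then obtain e :: "nat \<Rightarrow> 'l" where e: "inj e" "insert l0 {l. d l \<noteq> 0} \<subseteq> range e"
    using countable_subset_range_inj[OF _ assms(1)] by blast
  have d_e: "d l = 0" if "l \<notin> range e" for l
    using e(2) that by blast
  have "((\<lambda>k. norm (d (e k))) has_sum (\<Sum>\<^sub>\<infinity>l. norm (d l))) UNIV"
    using has_sum_infsum[OF abs] d_e has_sum_iff_has_sum_reindex[OF e(1), of "\<lambda>l. norm (d l)"]
    by simp
  then have summable: "summable (\<lambda>k. norm (d (e k)))"
    by (rule sums_summable[OF has_sum_imp_sums])
  have "(\<lambda>k. d (e k) * \<zeta> (e k) ^ n) sums Z n" for n
    using Z(1)[of n] d_e by (simp add: has_sum_iff_has_sum_reindex[OF e(1)] has_sum_imp_sums)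
  then have bound: "norm (\<Sum>k. d (e k) * \<zeta> (e k) ^ n) \<le> B" for n
    using Z(2) by (simp add: sums_iff)
  obtain k0 where k0: "e k0 = l0"
    using e(2) by blast
  have "norm (d (e k0)) \<le> B"
  proof (rule norm_le_if_bounded_power_sums[OF summable _ _ _ bound])
    show "norm (\<zeta> (e k)) = 1" for k by (rule \<zeta>(1))
    show "\<zeta> (e k0) = 1" using k0 \<zeta>(2) by simp
    show "\<zeta> (e k) \<noteq> 1" if "k \<noteq> k0" "d (e k) \<noteq> 0" for k
      using that k0 e(1) \<zeta>(3)[of "e k"] by (auto dest: injD)
  qed
  with k0 show ?thesis by simp
qed

lemma obtain_nonresonant_vector:
  fixes B :: "'v::euclidean_space set"
  assumes "countable B" "0 \<notin> B"
  obtains z where "\<And>b. b \<in> B \<Longrightarrow> cis (b \<bullet> z) \<noteq> 1"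
proof -
  define H where "H p = {z. fst p \<bullet> z = 2 * pi * of_int (snd p)}" for p :: "'v \<times> int"
  have "negligible (\<Union>(H ` (B \<times> UNIV)))"
  proof (rule negligible_countable_Union)
    show "countable (H ` (B \<times> UNIV))" using assms(1) by simp
  next
    fix S assume "S \<in> H ` (B \<times> UNIV)"
    then show "negligible S"
      using assms(2) by (auto simp: H_def intro!: negligible_hyperplane)
  qed
  then obtain z where z: "z \<notin> \<Union>(H ` (B \<times> UNIV))"
    using non_negligible_UNIV by (metis UNIV_eq_I)
  show ?thesis
  proof (rule that)
    fix b assume "b \<in> B"
    show "cis (b \<bullet> z) \<noteq> 1"
    proof
      assume "cis (b \<bullet> z) = 1"
      then have "cos (b \<bullet> z) = 1"
        by (metis Re_complex_of_real cis.sel(1) one_complex.sel(1))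
      then obtain n :: int where "b \<bullet> z = 2 * pi * of_int n"
        by (auto simp: cos_one_2pi_int mult_ac)
      with z \<open>b \<in> B\<close> show False
        by (auto simp: H_def)
    qed
  qed
qed

section \<open>Necessity of the frequency bound\<close>

lemma L2inf_sq_const:
  assumes "0 \<le> \<rho>"
  shows "L2inf_sq \<rho> (\<lambda>x y. h x) = L2_sq h"
  unfolding L2inf_sq_def using assms by (simp add: SUP_const)

lemma in_X_const:
  assumes "h \<in> borel_measurable borel" "L2_sq h < \<infinity>" "0 \<le> \<rho>"
  shows "in_X \<rho> (\<lambda>x y. h x)"
  using assms by (simp add: in_X_def L2inf_sq_const)

lemma extends_boundedE:
  assumes "extends_bounded \<rho> a M" "in_X \<rho> f"
  obtains g where "in_X \<rho> g" "\<And>y. y \<in> cball 0 \<rho> \<Longrightarrow> L2_has_sum (\<lambda>l x. ext_term a f l x y) (\<lambda>x. g x y)"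
    "L2inf_sq \<rho> g \<le> ennreal (M\<^sup>2) * L2inf_sq \<rho> f"
  using assms unfolding extends_bounded_def by blast

lemma L2_inner_ext_term_tf_shift:
  assumes [measurable]: "f \<in> borel_measurable borel"
  shows "L2_inner (\<lambda>x. ext_term c (\<lambda>x y. tf_shift z f x) l x y) (tf_shift m (tf_shift z f))
    = c l * exp (- (snd l \<bullet> y)) * cis ((snd l - snd m, fst m - fst l) \<bullet> z)
        * L2_inner (tf_shift l f) (tf_shift m f)"
proof -
  have "L2_inner (\<lambda>x. ext_term c (\<lambda>x y. tf_shift z f x) l x y) (tf_shift m (tf_shift z f))
      = c l * exp (- (snd l \<bullet> y)) * L2_inner (tf_shift l (tf_shift z f)) (tf_shift m (tf_shift z f))"
    unfolding ext_term_eq_tf_shift L2_inner_def by (simp add: mult.assoc)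
  then show ?thesis
    by (simp add: L2_inner_tf_shift_tf_shift mult.assoc)
qed

lemma tf_shift_cube_coefficients_bounded:
  fixes c :: "'a::euclidean_space \<times> 'a \<Rightarrow> complex"
  assumes ext: "extends_bounded \<rho> c M" and "0 \<le> M" and y: "y \<in> cball 0 \<rho>"
  obtains Z where
    "((\<lambda>l. c l * exp (- (snd l \<bullet> y)) * cis ((snd l - snd m, fst m - fst l) \<bullet> z)
        * L2_inner (tf_shift l cube_indicator) (tf_shift m cube_indicator)) has_sum Z) UNIV"
    "norm Z \<le> M"
proof -
  define \<phi> where "\<phi> = tf_shift z (cube_indicator :: 'a \<Rightarrow> complex)"
  define \<psi> where "\<psi> = tf_shift m \<phi>"
  have [measurable]: "\<phi> \<in> borel_measurable borel" "\<psi> \<in> borel_measurable borel"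
    unfolding \<phi>_def \<psi>_def by measurable
  have L2_\<phi>: "L2_sq \<phi> = 1" and L2_\<psi>: "L2_sq \<psi> = 1"
    unfolding \<psi>_def \<phi>_def by (simp_all add: L2_sq_tf_shift L2_sq_cube_indicator)
  have "0 \<le> \<rho>" using y norm_ge_zero[of y] by (simp del: norm_ge_zero)
  then have "in_X \<rho> (\<lambda>x y. \<phi> x)" and "L2inf_sq \<rho> (\<lambda>x y. \<phi> x) = 1"
    by (simp_all add: in_X_const L2inf_sq_const L2_\<phi>)
  with ext obtain g where g: "in_X \<rho> g" "L2_has_sum (\<lambda>l x. ext_term c (\<lambda>x y. \<phi> x) l x y) (\<lambda>x. g x y)"
      "L2inf_sq \<rho> g \<le> ennreal (M\<^sup>2)"
    by (metis extends_boundedE y mult_1_right)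
  have [measurable]: "(\<lambda>x. g x y) \<in> borel_measurable borel"
    using g(1) y by (simp add: in_X_def)
  have L2_g: "L2_sq (\<lambda>x. g x y) \<le> ennreal (M\<^sup>2)"
    using L2_sq_le_L2inf_sq[OF y, of g] g(3) by simp
  have L2_term: "L2_sq (\<lambda>x. ext_term c (\<lambda>x y. \<phi> x) l x y) < \<infinity>" for l
    unfolding ext_term_eq_tf_shift
    by (simp add: L2_sq_cmult L2_sq_tf_shift L2_\<phi> ennreal_mult_less_top)
  have "L2_sq (\<lambda>x. g x y) < \<infinity>"
    using L2_g by (simp add: le_less_trans)
  then have "((\<lambda>l. L2_inner (\<lambda>x. ext_term c (\<lambda>x y. \<phi> x) l x y) \<psi>) has_sum L2_inner (\<lambda>x. g x y) \<psi>) UNIV"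
    using L2_term L2_\<psi> by (intro has_sum_L2_inner_if_L2_has_sum g(2)) simp_all
  then have sum: "((\<lambda>l. c l * exp (- (snd l \<bullet> y)) * cis ((snd l - snd m, fst m - fst l) \<bullet> z)
        * L2_inner (tf_shift l cube_indicator) (tf_shift m cube_indicator)) has_sum L2_inner (\<lambda>x. g x y) \<psi>) UNIV"
    unfolding \<psi>_def \<phi>_def L2_inner_ext_term_tf_shift[OF measurable_cube_indicator] .
  have "norm (L2_inner (\<lambda>x. g x y) \<psi>) \<le> M"
    using norm_L2_inner_le[of "\<lambda>x. g x y" \<psi> M 1] L2_g L2_\<psi> \<open>0 \<le> M\<close> by simp
  with sum show ?thesis by (rule that)
qed

lemma norm_mult_exp_le_if_extends_bounded:
  fixes c :: "'a::euclidean_space \<times> 'a \<Rightarrow> complex"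
  assumes A: "in_algebra_A c" and ext: "extends_bounded \<rho> c M" and "0 \<le> M" "0 \<le> \<rho>"
  shows "norm (c l0) * exp (\<rho> * norm (snd l0)) \<le> M"
proof -
  \<comment> \<open>for \<open>snd l0 = 0\<close> division by zero makes \<open>y = 0\<close>, which still works\<close>
  define y where "y = - (\<rho> / norm (snd l0)) *\<^sub>R snd l0"
  have y: "y \<in> cball 0 \<rho>" "snd l0 \<bullet> y = - (\<rho> * norm (snd l0))"
    using \<open>0 \<le> \<rho>\<close> by (auto simp: y_def power2_norm_eq_inner[symmetric] power2_eq_square)
  define b where "b l = (snd l - snd l0, fst l0 - fst l)" for l :: "'a \<times> 'a"
  have B: "countable (b ` (tf_supp c - {l0}))" "0 \<notin> b ` (tf_supp c - {l0})"
    using countable_tf_supp[OF A] by (auto simp: b_def prod_eq_iff)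
  obtain z0 where "\<And>v. v \<in> b ` (tf_supp c - {l0}) \<Longrightarrow> cis (v \<bullet> z0) \<noteq> 1"
    using obtain_nonresonant_vector[OF B] by blast
  then have z0: "\<And>l. c l \<noteq> 0 \<Longrightarrow> l \<noteq> l0 \<Longrightarrow> cis (b l \<bullet> z0) \<noteq> 1"
    unfolding tf_supp_def by blast
  define d where "d l = c l * exp (- (snd l \<bullet> y))
      * L2_inner (tf_shift l cube_indicator) (tf_shift l0 (cube_indicator :: 'a \<Rightarrow> complex))" for l
  define \<zeta> where "\<zeta> l = cis (b l \<bullet> z0)" for l
  have "\<forall>n. \<exists>Z. ((\<lambda>l. d l * \<zeta> l ^ n) has_sum Z) UNIV \<and> norm Z \<le> M"
  proof
    fix n
    obtain Z where "((\<lambda>l. c l * exp (- (snd l \<bullet> y)) * cis (b l \<bullet> (of_nat n *\<^sub>R z0))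
        * L2_inner (tf_shift l cube_indicator) (tf_shift l0 cube_indicator)) has_sum Z) UNIV" "norm Z \<le> M"
      unfolding b_def by (rule tf_shift_cube_coefficients_bounded[OF ext \<open>0 \<le> M\<close> y(1)])
    moreover have "\<zeta> l ^ n = cis (b l \<bullet> (of_nat n *\<^sub>R z0))" for l
      unfolding \<zeta>_def inner_scaleR_right by (rule Complex.DeMoivre)
    ultimately show "\<exists>Z. ((\<lambda>l. d l * \<zeta> l ^ n) has_sum Z) UNIV \<and> norm Z \<le> M"
      by (auto simp: d_def mult_ac)
  qed
  from choice[OF this] obtain Z
    where Z: "\<And>n. ((\<lambda>l. d l * \<zeta> l ^ n) has_sum Z n) UNIV" "\<And>n. norm (Z n) \<le> M"
    by blast
  have "norm (d l0) \<le> M"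
  proof (rule norm_le_if_bounded_power_sums_has_sum[OF infinite_UNIV_euclidean_space _ _ _ Z])
    show "norm (\<zeta> l) = 1" for l by (simp add: \<zeta>_def)
    show "\<zeta> l0 = 1" by (simp add: \<zeta>_def b_def zero_prod_def[symmetric])
    show "\<zeta> l \<noteq> 1" if "l \<noteq> l0" "d l \<noteq> 0" for l
      using that z0[of l] by (auto simp: \<zeta>_def d_def)
  qed
  then show ?thesis
    by (simp add: d_def y(2) L2_inner_tf_shift_cube_indicator_self norm_mult)
qed

lemma le_if_exp_growth_bounded:
  fixes a C s t :: real
  assumes "0 < a" and bound: "\<And>\<rho>. 0 < \<rho> \<Longrightarrow> a * exp (\<rho> * s) \<le> C * exp (\<rho> * t)"
  shows "s \<le> t"
proof (rule ccontr)
  assume "\<not> s \<le> t"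
  define \<rho> where "\<rho> = (\<bar>C\<bar> + 1) / (a * (s - t))"
  have \<rho>: "0 < \<rho>" "a * (\<rho> * (s - t)) = \<bar>C\<bar> + 1"
    using \<open>0 < a\<close> \<open>\<not> s \<le> t\<close> by (auto simp: \<rho>_def)
  have "C < a * (1 + \<rho> * (s - t))"
    using \<rho>(2) \<open>0 < a\<close> by (simp add: distrib_left)
  also have "\<dots> \<le> a * exp (\<rho> * (s - t))"
    using \<open>0 < a\<close> exp_ge_add_one_self by simp
  finally have "C * exp (\<rho> * t) < a * exp (\<rho> * s)"
    by (simp add: right_diff_distrib exp_diff field_simps)
  with bound[OF \<rho>(1)] show False by simp
qed

lemma tf_supp_bounded_if_extends_bounded:
  fixes c :: "'a::euclidean_space \<times> 'a \<Rightarrow> complex"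
  assumes A: "in_algebra_A c" and "0 \<le> C"
    and ext: "\<And>\<rho>. 0 < \<rho> \<Longrightarrow> extends_bounded \<rho> c (C * exp (\<rho> * \<Omega>))"
  shows "tf_supp c \<subseteq> UNIV \<times> cball 0 \<Omega>"
proof
  fix l assume "l \<in> tf_supp c"
  then have "0 < norm (c l)" by (simp add: tf_supp_def)
  moreover have "norm (c l) * exp (\<rho> * norm (snd l)) \<le> C * exp (\<rho> * \<Omega>)" if "0 < \<rho>" for \<rho>
    using \<open>0 \<le> C\<close> that by (intro norm_mult_exp_le_if_extends_bounded[OF A ext]) auto
  ultimately have "norm (snd l) \<le> \<Omega>"
    by (rule le_if_exp_growth_bounded)
  then show "l \<in> UNIV \<times> cball 0 \<Omega>"
    by (cases l) simp
qed

section \<open>Conjugation by the Fourier transform\<close>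

lemma bij_rotate_tf_plane: "bij (\<lambda>l::'a::euclidean_space \<times> 'a. (snd l, - fst l))"
  by (rule bij_betwI[of _ _ _ "\<lambda>l. (- snd l, fst l)"]) auto

lemma norm_fourier_conj_coeffs: "norm (fourier_conj_coeffs c l) = norm (c (snd l, - fst l))"
  unfolding fourier_conj_coeffs_def by (simp add: norm_mult)

lemma in_algebra_A_fourier_conj_coeffs:
  fixes c :: "'a::euclidean_space \<times> 'a \<Rightarrow> complex"
  shows "in_algebra_A (fourier_conj_coeffs c) \<longleftrightarrow> in_algebra_A c"
  unfolding in_algebra_A_def norm_fourier_conj_coeffs
  using summable_on_reindex_bij_betw[OF bij_rotate_tf_plane, of "\<lambda>l. norm (c l)"] by simp

lemma A_norm_fourier_conj_coeffs:
  fixes c :: "'a::euclidean_space \<times> 'a \<Rightarrow> complex"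
  shows "A_norm (fourier_conj_coeffs c) = A_norm c"
  unfolding A_norm_def norm_fourier_conj_coeffs
  using infsum_reindex_bij_betw[OF bij_rotate_tf_plane, of "\<lambda>l. norm (c l)"] by simp

lemma tf_supp_fourier_conj_coeffs_subset_iff:
  fixes c :: "'a::euclidean_space \<times> 'a \<Rightarrow> complex"
  shows "tf_supp (fourier_conj_coeffs c) \<subseteq> UNIV \<times> cball 0 D \<longleftrightarrow> tf_supp c \<subseteq> cball 0 D \<times> UNIV"
proof -
  have "l \<in> tf_supp (fourier_conj_coeffs c) \<longleftrightarrow> (snd l, - fst l) \<in> tf_supp c" for l
    using norm_fourier_conj_coeffs[of c l] by (auto simp: tf_supp_def)
  then show ?thesis
    by (auto simp: subset_iff) (metis minus_minus)
qed

theorem theorem7: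
  fixes c :: "('a::euclidean_space \<times> 'a) \<Rightarrow> complex"
  assumes "in_algebra_A c"
  shows "(\<forall>\<Omega>>0. tf_supp c \<subseteq> UNIV \<times> cball 0 \<Omega> \<longrightarrow>
            (\<forall>\<rho>>0. extends_bounded \<rho> c (A_norm c * exp (\<rho> * \<Omega>))))
       \<and> (\<forall>C>0. \<forall>\<Omega>>0. (\<forall>\<rho>>0. extends_bounded \<rho> c (C * exp (\<rho> * \<Omega>))) \<longrightarrow>
            tf_supp c \<subseteq> UNIV \<times> cball 0 \<Omega>)
       \<and> (\<forall>D>0. tf_supp c \<subseteq> cball 0 D \<times> UNIV \<longrightarrow>
            (\<forall>\<rho>>0. extends_bounded \<rho> (fourier_conj_coeffs c) (A_norm c * exp (\<rho> * D))))
       \<and> (\<forall>C>0. \<forall>D>0. (\<forall>\<rho>>0. extends_bounded \<rho> (fourier_conj_coeffs c) (C * exp (\<rho> * D))) \<longrightarrow>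
            tf_supp c \<subseteq> cball 0 D \<times> UNIV)"
proof -
  have S: "in_algebra_A (fourier_conj_coeffs c)"
    using assms by (simp add: in_algebra_A_fourier_conj_coeffs)
  show ?thesis
  proof (intro conjI allI impI)
    show "extends_bounded \<rho> c (A_norm c * exp (\<rho> * \<Omega>))"
      if "0 < \<Omega>" "tf_supp c \<subseteq> UNIV \<times> cball 0 \<Omega>" for \<Omega> \<rho> :: real
      using that by (intro extends_bounded_if_tf_supp_bounded[OF assms]) auto
    show "tf_supp c \<subseteq> UNIV \<times> cball 0 \<Omega>"
      if "0 < C" "\<forall>\<rho>>0. extends_bounded \<rho> c (C * exp (\<rho> * \<Omega>))" for C \<Omega> :: real
      using that tf_supp_bounded_if_extends_bounded[OF assms, of C \<Omega>] by simp
    show "extends_bounded \<rho> (fourier_conj_coeffs c) (A_norm c * exp (\<rho> * D))"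
      if "0 < D" "tf_supp c \<subseteq> cball 0 D \<times> UNIV" for D \<rho> :: real
      using extends_bounded_if_tf_supp_bounded[OF S, of D \<rho>] that
      by (simp add: tf_supp_fourier_conj_coeffs_subset_iff A_norm_fourier_conj_coeffs)
    show "tf_supp c \<subseteq> cball 0 D \<times> UNIV"
      if "0 < C" "\<forall>\<rho>>0. extends_bounded \<rho> (fourier_conj_coeffs c) (C * exp (\<rho> * D))" for C D :: real
      using tf_supp_bounded_if_extends_bounded[OF S, of C D] that
      by (simp add: tf_supp_fourier_conj_coeffs_subset_iff)
  qed
qed

end
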